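(* Let $L$ be a construction of an ASC-hypergraph $H$, let $Y\in L$ and put $Z=\bigcup H\setminus Y$. Then ${}_Z L$ is a construction of the ASC-hypergraph ${}_Z H$.
   Context: A hypergraph is a finite set $H$ of nonempty subsets of some finite set; its carrier is $\bigcup H$. For a family $F$ and set $Y$, $F_Y=\{X\in F\mid X\subseteq Y\}$, and ${}_Z F=\{X\cap Z\mid X\in F,\ X\cap Z\neq\emptyset\}$. A hypergraph partition of $H$ is a partition $\{H_1,\dots,H_n\}$ ($n\ge0$) of the set $H$ with $\{\bigcup H_1,\dots,\bigcup H_n\}$ a partition of $\bigcup H$; $H$ is connected if it has exactly one hypergraph partition; the finest hypergraph partition is the unique one whose blocks are connected. $H$ is atomic if $\{x\}\in H$ for all $x\in\bigcup H$; saturated if $X_1,X_2\in H$ with $X_1\cap X_2\neq\emptyset$ imply $X_1\cup X_2\in H$. An ASC-hypergraph is one that is atomic, saturated and connected. Constructions of an atomic $H$, by induction on $|\bigcup H|$: (0) $\emptyset$ is the only construction of $\emptyset$; (1) if $|\bigcup H|\ge1$, $H$ connected, $x\in\bigcup H$, $K$ a construction of $H_{\bigcup H\setminus\{x\}}$, then $K\cup\{\bigcup H\}$ is a construction of $H$; (2) if $H$ is not connected with finest hypergraph partition $\{H_1,\dots,H_n\}$, $n\ge2$, and $K_i$ is a construction of $H_i$, then $K_1\cup\dots\cup K_n$ is a construction of $H$. *)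

theory Defs
  imports Main "HOL-Library.Disjoint_Sets"
begin

definition hypergraph :: "'a set set \<Rightarrow> bool" where
  "hypergraph H \<longleftrightarrow> finite H \<and> (\<forall>X\<in>H. X \<noteq> {} \<and> finite X)"

definition restr :: "'a set set \<Rightarrow> 'a set \<Rightarrow> 'a set set" where
  "restr F Y = {X \<in> F. X \<subseteq> Y}"

text \<open>_Z F = {X inter Z | X in F, X inter Z nonempty}\<close>
definition trace :: "'a set \<Rightarrow> 'a set set \<Rightarrow> 'a set set" where
  "trace Z F = {X \<inter> Z | X. X \<in> F \<and> X \<inter> Z \<noteq> {}}"

definition hpartition :: "'a set set \<Rightarrow> 'a set set set \<Rightarrow> bool" where
  "hpartition H P \<longleftrightarrow> partition_on H P \<and> partition_on (\<Union>H) (Union ` P) \<and> inj_on Union P"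

definition hconnected :: "'a set set \<Rightarrow> bool" where
  "hconnected H \<longleftrightarrow> (\<exists>!P. hpartition H P)"

definition finest_hpartition :: "'a set set \<Rightarrow> 'a set set set \<Rightarrow> bool" where
  "finest_hpartition H P \<longleftrightarrow> hpartition H P \<and> (\<forall>Hi\<in>P. hconnected Hi)"

definition atomic :: "'a set set \<Rightarrow> bool" where
  "atomic H \<longleftrightarrow> (\<forall>x\<in>\<Union>H. {x} \<in> H)"

definition saturated :: "'a set set \<Rightarrow> bool" where
  "saturated H \<longleftrightarrow> (\<forall>X1\<in>H. \<forall>X2\<in>H. X1 \<inter> X2 \<noteq> {} \<longrightarrow> X1 \<union> X2 \<in> H)"

definition ASC :: "'a set set \<Rightarrow> bool" where
  "ASC H \<longleftrightarrow> hypergraph H \<and> atomic H \<and> saturated H \<and> hconnected H"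

inductive construction :: "'a set set \<Rightarrow> 'a set set \<Rightarrow> bool" where
  empty: "construction {} {}"
| conn: "\<lbrakk> hypergraph H; atomic H; hconnected H; x \<in> \<Union>H;
           construction (restr H (\<Union>H - {x})) K \<rbrakk>
         \<Longrightarrow> construction H (insert (\<Union>H) K)"
| split: "\<lbrakk> hypergraph H; atomic H; \<not> hconnected H; finest_hpartition H P; card P \<ge> 2;
            \<forall>Hi\<in>P. construction Hi (Kf Hi) \<rbrakk>
         \<Longrightarrow> construction H (\<Union>Hi\<in>P. Kf Hi)"

end

theory Submission
  imports Defs
begin

(* Write Z for the complement in the carrier of H of a member Y of the construction L.
   That the trace of H on Z is again ASC is local: atomicity and saturation are
   inherited by traces, and a nonempty saturated connected hypergraph contains its own
   carrier, so the trace contains its carrier and is therefore connected.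

   That the trace of L is a construction of the trace of H is proved by induction on L,
   for all Y in L at once; saturation of H is the only invariant needed.  In a
   rule-(1) step L = insert (carrier H) K, where K constructs H with a point x deleted.
   Either Y is the whole carrier, and everything traces to the empty hypergraph, or x
   lies in Z and the traced step is again a rule-(1) step deleting x.  In a rule-(2)
   step Y lies in the construction of one block of the finest hypergraph partition;
   tracing replaces that block by its trace, leaves the other blocks untouched, and
   the pieces are glued back together by rule (2). *)

definition carrier_disjoint :: "'a set set set \<Rightarrow> bool" where
  "carrier_disjoint P \<longleftrightarrow> (\<forall>B\<in>P. \<forall>C\<in>P. B \<noteq> C \<longrightarrow> \<Union>B \<inter> \<Union>C = {})"

lemma hpartitionD:
  assumes "hpartition G P"
  shows "\<Union>P = G" and "\<And>B. B \<in> P \<Longrightarrow> B \<noteq> {}" and "carrier_disjoint P"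
proof -
  have blocks: "partition_on G P" and carriers: "partition_on (\<Union>G) (Union ` P)"
    and inj: "inj_on Union P"
    using assms by (auto simp: hpartition_def)
  show "\<Union>P = G" and "\<And>B. B \<in> P \<Longrightarrow> B \<noteq> {}"
    using blocks by (auto simp: partition_on_def)
  show "carrier_disjoint P" unfolding carrier_disjoint_def
  proof (intro ballI impI)
    fix B C assume "B \<in> P" "C \<in> P" "B \<noteq> C"
    then have "\<Union>B \<noteq> \<Union>C" using inj by (auto simp: inj_on_def)
    then show "\<Union>B \<inter> \<Union>C = {}" using carriers \<open>B \<in> P\<close> \<open>C \<in> P\<close>
      by (auto simp: partition_on_def pairwise_def disjnt_def)
  qed
qed

lemma hpartitionI:
  assumes "hypergraph G" "\<Union>P = G" "\<And>B. B \<in> P \<Longrightarrow> B \<noteq> {}" "carrier_disjoint P"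
  shows "hpartition G P"
proof -
  have members_ne: "\<And>X. X \<in> G \<Longrightarrow> X \<noteq> {}"
    using assms(1) by (auto simp: hypergraph_def)
  have carrier_ne: "\<Union>B \<noteq> {}" if "B \<in> P" for B
    using assms(2,3) members_ne that by blast
  have "partition_on G P"
  proof (rule partition_onI)
    fix p q assume "p \<in> P" "q \<in> P" "p \<noteq> q"
    then have "\<Union>p \<inter> \<Union>q = {}" using assms(4) by (auto simp: carrier_disjoint_def)
    then show "disjnt p q"
      using members_ne assms(2) \<open>p \<in> P\<close> Union_upper unfolding disjnt_def by blast
  qed (use assms(2,3) in auto)
  moreover have "inj_on Union P"
  proof (rule inj_onI, rule ccontr)
    fix B C assume "B \<in> P" "C \<in> P" "\<Union>B = \<Union>C" "B \<noteq> C"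
    then have "\<Union>B \<inter> \<Union>C = {}" using assms(4) unfolding carrier_disjoint_def by blast
    then show False using carrier_ne[OF \<open>B \<in> P\<close>] \<open>\<Union>B = \<Union>C\<close> by blast
  qed
  moreover have "partition_on (\<Union>G) (Union ` P)"
  proof (rule partition_onI)
    fix p q assume "p \<in> Union ` P" "q \<in> Union ` P" "p \<noteq> q"
    then show "disjnt p q" using assms(4) by (auto simp: carrier_disjoint_def disjnt_def)
  qed (use assms(2) carrier_ne in auto)
  ultimately show ?thesis by (simp add: hpartition_def)
qed

lemma hpartition_singleton: "hypergraph G \<Longrightarrow> G \<noteq> {} \<Longrightarrow> hpartition G {G}"
  by (rule hpartitionI) (auto simp: carrier_disjoint_def)

lemma carrier_disjoint_subset: "carrier_disjoint Q \<Longrightarrow> R \<subseteq> Q \<Longrightarrow> carrier_disjoint R"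
  unfolding carrier_disjoint_def by blast

lemma carrier_disjoint_insert:
  "carrier_disjoint Q \<Longrightarrow> (\<And>C. C \<in> Q \<Longrightarrow> \<Union>T \<inter> \<Union>C = {}) \<Longrightarrow> carrier_disjoint (insert T Q)"
  unfolding carrier_disjoint_def by blast

lemma hconnected_empty: "hconnected {}"
  unfolding hconnected_def hpartition_def by (auto simp: partition_on_empty)

lemma hconnected_if_carrier_mem:
  assumes "hypergraph G" "\<Union>G \<in> G"
  shows "hconnected G"
proof -
  have "P = {G}" if "hpartition G P" for P
  proof -
    note P = hpartitionD[OF that]
    txt \<open>The block containing the carrier absorbs every other block.\<close>
    obtain B where B: "B \<in> P" "\<Union>G \<in> B" using P(1) assms(2) by blast
    have "C = B" if "C \<in> P" for C
    proof (rule ccontr)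
      assume "C \<noteq> B"
      then have "\<Union>C \<inter> \<Union>B = {}" using P(3) \<open>C \<in> P\<close> B(1) by (auto simp: carrier_disjoint_def)
      moreover obtain X where "X \<in> C" using P(2) \<open>C \<in> P\<close> by blast
      moreover have "X \<in> G" "X \<subseteq> \<Union>B" using \<open>X \<in> C\<close> P(1) \<open>C \<in> P\<close> B(2) by blast+
      moreover have "X \<subseteq> \<Union>C" using \<open>X \<in> C\<close> by blast
      ultimately have "X = {}" by blast
      then show False using \<open>X \<in> G\<close> assms(1) by (auto simp: hypergraph_def)
    qed
    then have "P = {B}" using B(1) by blast
    then show ?thesis using P(1) by simp
  qed
  moreover have "hpartition G {G}" using hpartition_singleton assms by blast
  ultimately show ?thesis unfolding hconnected_def by blast
qed

text \<open>Conversely, a nonempty saturated connected hypergraph contains its carrier: its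
  inclusion-maximal members are pairwise disjoint by saturation, so the hypergraphs
  below them form a hypergraph partition, which by connectivity has a single block.\<close>

lemma saturated_hconnected_carrier_mem:
  assumes "hypergraph H" "saturated H" "hconnected H" "H \<noteq> {}"
  shows "\<Union>H \<in> H"
proof -
  define M where "M = {X\<in>H. \<forall>X'\<in>H. X \<subseteq> X' \<longrightarrow> X' = X}"
  have below_max: "\<exists>m\<in>M. X \<subseteq> m" if "X \<in> H" for X
    using finite_has_maximal2[OF _ that] assms(1) unfolding M_def hypergraph_def by auto
  have max_disjoint: "m1 \<inter> m2 = {}" if "m1 \<in> M" "m2 \<in> M" "m1 \<noteq> m2" for m1 m2
  proof (rule ccontr)
    assume "m1 \<inter> m2 \<noteq> {}"
    then have "m1 \<union> m2 \<in> H" using that assms(2) unfolding M_def saturated_def by blast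
    moreover have "m1 \<subseteq> m1 \<union> m2" "m2 \<subseteq> m1 \<union> m2" by auto
    ultimately have "m1 \<union> m2 = m1" "m1 \<union> m2 = m2"
      using that(1,2) unfolding M_def by blast+
    then show False using that(3) by simp
  qed
  define P where "P = restr H ` M"
  have Union_block: "\<Union>(restr H m) = m" if "m \<in> M" for m
    using that unfolding M_def restr_def by auto
  have "hpartition H P"
  proof (rule hpartitionI[OF assms(1)])
    show "\<Union>P = H" and "\<And>B. B \<in> P \<Longrightarrow> B \<noteq> {}"
      unfolding P_def restr_def using below_max by (auto simp: M_def)
    show "carrier_disjoint P" unfolding carrier_disjoint_def
    proof (intro ballI impI)
      fix B C assume "B \<in> P" "C \<in> P" "B \<noteq> C"
      then obtain m1 m2 where "m1 \<in> M" "m2 \<in> M" "B = restr H m1" "C = restr H m2"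
        unfolding P_def by blast
      then show "\<Union>B \<inter> \<Union>C = {}" using Union_block max_disjoint \<open>B \<noteq> C\<close> by metis
    qed
  qed
  then have "P = {H}"
    using hpartition_singleton assms(1,3,4) unfolding hconnected_def by blast
  then obtain m where "m \<in> M" "restr H m = H" unfolding P_def by (metis imageE insertI1)
  then have "\<Union>H = m" using Union_block by metis
  then show ?thesis using \<open>m \<in> M\<close> unfolding M_def by auto
qed

lemma Union_trace: "\<Union>(trace Z H) = \<Union>H \<inter> Z"
  by (auto simp: trace_def)

lemma hypergraph_trace: "hypergraph H \<Longrightarrow> hypergraph (trace Z H)"
proof -
  assume H: "hypergraph H"
  have "trace Z H = (\<lambda>X. X \<inter> Z) ` {X \<in> H. X \<inter> Z \<noteq> {}}" by (auto simp: trace_def)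
  then show ?thesis using H by (auto simp: hypergraph_def trace_def)
qed

lemma atomic_trace: "atomic H \<Longrightarrow> atomic (trace Z H)"
  unfolding atomic_def trace_def by auto

lemma saturated_trace: "saturated H \<Longrightarrow> saturated (trace Z H)"
  unfolding saturated_def trace_def
proof clarify
  fix X1 X2
  assume "\<forall>X1\<in>H. \<forall>X2\<in>H. X1 \<inter> X2 \<noteq> {} \<longrightarrow> X1 \<union> X2 \<in> H"
    and "X1 \<in> H" "X2 \<in> H" "X1 \<inter> Z \<inter> (X2 \<inter> Z) \<noteq> {}"
  moreover have "X1 \<inter> Z \<union> X2 \<inter> Z = (X1 \<union> X2) \<inter> Z" by blast
  ultimately show "\<exists>X. X1 \<inter> Z \<union> X2 \<inter> Z = X \<inter> Z \<and> X \<in> H \<and> X \<inter> Z \<noteq> {}" by blast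
qed

lemma ASC_trace:
  assumes "ASC H"
  shows "ASC (trace Z H)"
proof -
  have H: "hypergraph H" "atomic H" "saturated H" "hconnected H"
    using assms by (auto simp: ASC_def)
  have "hconnected (trace Z H)"
  proof (cases "\<Union>H \<inter> Z = {}")
    case True
    then have "trace Z H = {}" by (auto simp: trace_def)
    then show ?thesis by (simp add: hconnected_empty)
  next
    case False
    then have "\<Union>H \<in> H" using saturated_hconnected_carrier_mem H by blast
    then have "\<Union>(trace Z H) \<in> trace Z H" using False by (auto simp: trace_def)
    then show ?thesis using hconnected_if_carrier_mem hypergraph_trace[OF H(1)] by blast
  qed
  then show ?thesis using H by (simp add: ASC_def hypergraph_trace atomic_trace saturated_trace)
qed

lemma trace_cong: "(\<And>k. k \<in> K \<Longrightarrow> k \<inter> Z = k \<inter> Z') \<Longrightarrow> trace Z K = trace Z' K"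
  unfolding trace_def by (metis (no_types, lifting))

lemma restr_trace_delete:
  assumes "x \<in> Z"
  shows "restr (trace Z H) (Z - {x}) = trace (Z - {x}) (restr H (\<Union>H - {x}))"
proof (rule set_eqI, rule iffI)
  fix U assume "U \<in> restr (trace Z H) (Z - {x})"
  then obtain X where "X \<in> H" "U = X \<inter> Z" "U \<noteq> {}" "x \<notin> X"
    unfolding restr_def trace_def using assms by blast
  then show "U \<in> trace (Z - {x}) (restr H (\<Union>H - {x}))"
    unfolding restr_def trace_def by blast
next
  fix U assume "U \<in> trace (Z - {x}) (restr H (\<Union>H - {x}))"
  then obtain X where "X \<in> H" "x \<notin> X" "U = X \<inter> Z" "U \<noteq> {}"
    unfolding restr_def trace_def by blast
  then show "U \<in> restr (trace Z H) (Z - {x})"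
    unfolding restr_def trace_def by blast
qed

lemma trace_Union_blocks:
  assumes members: "\<And>B X. B \<in> P \<Longrightarrow> X \<in> F B \<Longrightarrow> X \<noteq> {} \<and> X \<subseteq> \<Union>B"
    and disj: "carrier_disjoint P" and "Hj \<in> P" "Y \<subseteq> \<Union>Hj" "\<Union>(\<Union>P) \<subseteq> W"
  shows "trace (W - Y) (\<Union>B\<in>P. F B) = trace (\<Union>Hj - Y) (F Hj) \<union> (\<Union>B\<in>P - {Hj}. F B)"
proof -
  have other: "X \<inter> (W - Y) = X" if "B \<in> P" "B \<noteq> Hj" "X \<in> F B" for B X
  proof -
    have "\<Union>B \<inter> \<Union>Hj = {}" using disj that(1,2) \<open>Hj \<in> P\<close> by (auto simp: carrier_disjoint_def)
    then show ?thesis using members[OF that(1,3)] assms(4,5) that(1) by blast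
  qed
  have own: "X \<inter> (W - Y) = X \<inter> (\<Union>Hj - Y)" if "X \<in> F Hj" for X
    using members[OF \<open>Hj \<in> P\<close> that] assms(3,5) by blast
  show ?thesis
  proof (rule set_eqI, rule iffI)
    fix U assume "U \<in> trace (W - Y) (\<Union>B\<in>P. F B)"
    then obtain X B where X: "B \<in> P" "X \<in> F B" "U = X \<inter> (W - Y)" "U \<noteq> {}"
      unfolding trace_def by blast
    show "U \<in> trace (\<Union>Hj - Y) (F Hj) \<union> (\<Union>B\<in>P - {Hj}. F B)"
    proof (cases "B = Hj")
      case True
      then have "U = X \<inter> (\<Union>Hj - Y)" "X \<in> F Hj" using X own by auto
      then have "U \<in> trace (\<Union>Hj - Y) (F Hj)" using X(4) unfolding trace_def by blast
      then show ?thesis by blast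
    next
      case False
      then have "U \<in> F B" using X other by auto
      then show ?thesis using X(1) False by blast
    qed
  next
    fix U assume "U \<in> trace (\<Union>Hj - Y) (F Hj) \<union> (\<Union>B\<in>P - {Hj}. F B)"
    then consider X where "X \<in> F Hj" "U = X \<inter> (\<Union>Hj - Y)" "U \<noteq> {}"
      | B where "B \<in> P" "B \<noteq> Hj" "U \<in> F B"
      unfolding trace_def by blast
    then show "U \<in> trace (W - Y) (\<Union>B\<in>P. F B)"
    proof cases
      case (1 X)
      then have "U = X \<inter> (W - Y)" using own by simp
      then show ?thesis using 1 \<open>Hj \<in> P\<close> unfolding trace_def by blast
    next
      case (2 B)
      then have "U = U \<inter> (W - Y)" "U \<noteq> {}" using other[of B U] members[of B U] by auto
      then show ?thesis using 2 unfolding trace_def by blast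
    qed
  qed
qed

lemma construction_members:
  "construction H K \<Longrightarrow> k \<in> K \<Longrightarrow> k \<noteq> {} \<and> k \<subseteq> \<Union>H"
proof (induction arbitrary: k rule: construction.induct)
  case (split H P Kf)
  then show ?case
    using hpartitionD(1) by (fastforce simp: finest_hpartition_def)
qed (auto simp: restr_def)

lemma construction_empty_hypergraph: "construction {} K \<Longrightarrow> K = {}"
  using construction_members by fastforce

lemma Union_restr_delete: "atomic H \<Longrightarrow> \<Union>(restr H (\<Union>H - {x})) = \<Union>H - {x}"
  unfolding atomic_def restr_def by blast

lemma saturated_restr: "saturated H \<Longrightarrow> saturated (restr H S)"
  unfolding saturated_def restr_def by auto

text \<open>The blocks of the finest hypergraph partition of an atomic saturated hypergraph are
  ASC: a member of \<open>H\<close> meeting the carrier of a block belongs to that block.\<close>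

lemma finest_hpartition_block_ASC:
  assumes "hypergraph H" "atomic H" "saturated H" "finest_hpartition H P" "B \<in> P"
  shows "ASC B"
proof -
  have P: "hpartition H P" and "hconnected B"
    using assms(4,5) by (auto simp: finest_hpartition_def)
  note P = hpartitionD[OF P]
  have BH: "B \<subseteq> H" using P(1) assms(5) by blast
  have into_block: "X \<in> B" if "X \<in> H" "X \<inter> \<Union>B \<noteq> {}" for X
  proof -
    obtain C where "C \<in> P" "X \<in> C" using P(1) \<open>X \<in> H\<close> by blast
    moreover have "\<Union>C \<inter> \<Union>B = {}" if "C \<in> P" "C \<noteq> B"
      using P(3) that assms(5) by (auto simp: carrier_disjoint_def)
    ultimately show ?thesis using \<open>X \<inter> \<Union>B \<noteq> {}\<close> by blast
  qed
  have "hypergraph B" using assms(1) BH unfolding hypergraph_def by (meson finite_subset subsetD)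
  moreover have "atomic B"
    using assms(2) BH into_block unfolding atomic_def by blast
  moreover have "saturated B" unfolding saturated_def
  proof (intro ballI impI)
    fix X1 X2 assume "X1 \<in> B" "X2 \<in> B" "X1 \<inter> X2 \<noteq> {}"
    then have "X1 \<union> X2 \<in> H" using assms(3) BH unfolding saturated_def by blast
    moreover have "(X1 \<union> X2) \<inter> \<Union>B \<noteq> {}"
      using \<open>X1 \<in> B\<close> \<open>hypergraph B\<close> by (auto simp: hypergraph_def)
    ultimately show "X1 \<union> X2 \<in> B" using into_block by blast
  qed
  ultimately show ?thesis using \<open>hconnected B\<close> by (simp add: ASC_def)
qed

text \<open>With at most one block
  there is nothing to do; with at least two, the cover is the finest hypergraph partition
  of \<open>G\<close>, \<open>G\<close> is not connected, and rule (2) applies.\<close>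

lemma construction_of_nonempty_blocks:
  assumes G: "hypergraph G" "atomic G" and cover: "\<Union>P = G" "\<And>B. B \<in> P \<Longrightarrow> B \<noteq> {}"
    and disj: "carrier_disjoint P" and conn: "\<And>B. B \<in> P \<Longrightarrow> hconnected B"
    and cons: "\<And>B. B \<in> P \<Longrightarrow> construction B (Kf B)"
  shows "construction G (\<Union>B\<in>P. Kf B)"
proof -
  have "P \<subseteq> Pow G" using cover(1) by blast
  then have "finite P" using G(1) finite_subset by (auto simp: hypergraph_def)
  consider "card P = 0" | "card P = 1" | "card P \<ge> 2" by linarith
  then show ?thesis
  proof cases
    case 1
    then have "P = {}" using \<open>finite P\<close> by simp
    then show ?thesis using cover(1) construction.empty by simp
  next
    case 2
    then obtain B where "P = {B}" by (rule card_1_singletonE)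
    then show ?thesis using cover(1) cons by simp
  next
    case 3
    have partition: "hpartition G P" by (rule hpartitionI[OF G(1) cover disj])
    moreover have "G \<noteq> {}" using 3 cover by fastforce
    then have "hpartition G {G}" by (rule hpartition_singleton[OF G(1)])
    moreover have "P \<noteq> {G}" using 3 by auto
    ultimately have "\<not> hconnected G" unfolding hconnected_def by blast
    moreover have "finest_hpartition G P" using partition conn by (simp add: finest_hpartition_def)
    ultimately show ?thesis using construction.split[OF G _ _ 3] cons by blast
  qed
qed

text \<open>The same with empty blocks allowed; these contribute only the empty construction.\<close>

lemma construction_of_blocks:
  assumes G: "hypergraph G" "atomic G" and cover: "\<Union>P = G"
    and disj: "carrier_disjoint P" and conn: "\<And>B. B \<in> P \<Longrightarrow> hconnected B"
    and cons: "\<And>B. B \<in> P \<Longrightarrow> construction B (Kf B)"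
  shows "construction G (\<Union>B\<in>P. Kf B)"
proof -
  have "(\<Union>B\<in>P. Kf B) = (\<Union>B\<in>P - {{}}. Kf B)"
    using cons construction_empty_hypergraph by blast
  moreover have "construction G (\<Union>B\<in>P - {{}}. Kf B)"
    using construction_of_nonempty_blocks[OF G, of "P - {{}}" Kf]
      carrier_disjoint_subset[OF disj] cover conn cons
    by auto
  ultimately show ?thesis by simp
qed

text \<open>Here \<open>K\<close> constructs \<open>H\<close> with the point \<open>x\<close> deleted and
  \<open>Y \<in> K\<close>, so \<open>x\<close> lies in \<open>Z = \<Union>H - Y\<close>.  The trace of \<open>H\<close> on \<open>Z\<close> contains its carrier \<open>Z\<close>,
  hence is connected, and deleting \<open>x\<close> from it gives the trace on \<open>Z - {x}\<close> of \<open>H\<close> with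
  \<open>x\<close> deleted, which the traced \<open>K\<close> constructs.\<close>

lemma construction_trace_delete_step:
  assumes H: "hypergraph H" "atomic H" "saturated H" "hconnected H" "x \<in> \<Union>H"
    and K: "construction (restr H (\<Union>H - {x})) K" "Y \<in> K"
    and traced_K: "construction (trace (\<Union>H - {x} - Y) (restr H (\<Union>H - {x})))
                                 (trace (\<Union>H - {x} - Y) K)"
  shows "construction (trace (\<Union>H - Y) H) (trace (\<Union>H - Y) (insert (\<Union>H) K))"
proof -
  define Z where "Z = \<Union>H - Y"
  define T where "T = trace Z H"
  have K_members: "k \<subseteq> \<Union>H - {x}" if "k \<in> K" for k
    using construction_members[OF K(1) that] Union_restr_delete[OF H(2)] by blast
  have "x \<in> Z" using K_members[OF K(2)] H(5) unfolding Z_def by blast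
  have Union_T: "\<Union>T = Z" unfolding T_def Union_trace Z_def by blast
  have T: "hypergraph T" "atomic T"
    unfolding T_def by (rule hypergraph_trace[OF H(1)], rule atomic_trace[OF H(2)])
  have "H \<noteq> {}" using H(5) by blast
  then have "\<Union>H \<in> H" using saturated_hconnected_carrier_mem H(1,3,4) by blast
  then have "\<Union>H \<inter> Z \<in> trace Z H" using \<open>x \<in> Z\<close> H(5) unfolding trace_def by blast
  then have "\<Union>T \<in> T" unfolding T_def Union_trace .
  then have "hconnected T" using hconnected_if_carrier_mem T(1) by blast
  have "restr T (\<Union>T - {x}) = trace (Z - {x}) (restr H (\<Union>H - {x}))"
    using restr_trace_delete[OF \<open>x \<in> Z\<close>, of H] Union_T unfolding T_def by simp
  moreover have "trace (Z - {x}) K = trace Z K"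
    using K_members by (intro trace_cong) blast
  moreover have "Z - {x} = \<Union>H - {x} - Y" unfolding Z_def by blast
  ultimately have "construction (restr T (\<Union>T - {x})) (trace Z K)" using traced_K by simp
  then have "construction T (insert (\<Union>T) (trace Z K))"
    using construction.conn[OF T \<open>hconnected T\<close>] \<open>x \<in> Z\<close> Union_T by simp
  moreover have "trace Z (insert (\<Union>H) K) = insert Z (trace Z K)"
    using \<open>x \<in> Z\<close> unfolding trace_def Z_def by blast
  ultimately show ?thesis using Union_T unfolding T_def Z_def by simp
qed

lemma carrier_disjoint_replace:
  assumes "carrier_disjoint P" "Hj \<in> P" "\<Union>T \<subseteq> \<Union>Hj"
  shows "carrier_disjoint (insert T (P - {Hj}))"
    and "(\<And>B. B \<in> P \<Longrightarrow> \<Union>B \<noteq> {}) \<Longrightarrow> T \<notin> P - {Hj}"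
proof -
  have disjoint: "\<Union>T \<inter> \<Union>C = {}" if "C \<in> P - {Hj}" for C
  proof -
    have "\<Union>Hj \<inter> \<Union>C = {}"
      using assms(1,2) that unfolding carrier_disjoint_def by (metis DiffE singletonI)
    then show ?thesis using assms(3) by blast
  qed
  show "carrier_disjoint (insert T (P - {Hj}))"
    by (rule carrier_disjoint_insert[OF carrier_disjoint_subset[OF assms(1) Diff_subset] disjoint])
  show "T \<notin> P - {Hj}" if "\<And>B. B \<in> P \<Longrightarrow> \<Union>B \<noteq> {}"
  proof
    assume "T \<in> P - {Hj}"
    then have "\<Union>T = {}" using disjoint by blast
    then show False using that \<open>T \<in> P - {Hj}\<close> by blast
  qed
qed

text \<open>Tracing replaces \<open>Hj\<close> and its construction by their traces on
  \<open>\<Union>Hj - Y\<close> and leaves the other blocks untouched; the traced block is again ASC, so the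
  pieces glue to a construction of the traced hypergraph.\<close>

lemma construction_trace_split_step:
  assumes H: "hypergraph H" "atomic H" "saturated H" "finest_hpartition H P"
    and cons: "\<And>B. B \<in> P \<Longrightarrow> construction B (Kf B)"
    and Hj: "Hj \<in> P" "Y \<in> Kf Hj"
    and traced_Kj: "construction (trace (\<Union>Hj - Y) Hj) (trace (\<Union>Hj - Y) (Kf Hj))"
  shows "construction (trace (\<Union>H - Y) H) (trace (\<Union>H - Y) (\<Union>B\<in>P. Kf B))"
proof -
  have partition: "hpartition H P" and conn: "\<And>B. B \<in> P \<Longrightarrow> hconnected B"
    using H(4) by (auto simp: finest_hpartition_def)
  note P = hpartitionD[OF partition]
  have H_members: "\<And>B X. B \<in> P \<Longrightarrow> X \<in> B \<Longrightarrow> X \<noteq> {} \<and> X \<subseteq> \<Union>B"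
    using P(1) H(1) by (auto simp: hypergraph_def)
  have K_members: "\<And>B X. B \<in> P \<Longrightarrow> X \<in> Kf B \<Longrightarrow> X \<noteq> {} \<and> X \<subseteq> \<Union>B"
    using construction_members cons by blast
  have "Y \<subseteq> \<Union>Hj" using K_members Hj by blast
  have "\<Union>(\<Union>P) \<subseteq> \<Union>H" using P(1) by simp
  define Tj where "Tj = trace (\<Union>Hj - Y) Hj"
  define P' where "P' = insert Tj (P - {Hj})"
  define Kf' where "Kf' = Kf(Tj := trace (\<Union>Hj - Y) (Kf Hj))"
  have "\<Union>Tj \<subseteq> \<Union>Hj" unfolding Tj_def Union_trace by blast
  note replace = carrier_disjoint_replace[OF P(3) Hj(1) this]
  have P'_disjoint: "carrier_disjoint P'" unfolding P'_def by (rule replace(1))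
  have "\<Union>B \<noteq> {}" if "B \<in> P" for B
    using P(2)[OF that] H_members[OF that] by blast
  then have "Tj \<notin> P - {Hj}" by (rule replace(2))
  have "trace (\<Union>H - Y) H = \<Union>P'"
    using trace_Union_blocks[where F="\<lambda>B. B", OF H_members P(3) Hj(1) \<open>Y \<subseteq> \<Union>Hj\<close>
        \<open>\<Union>(\<Union>P) \<subseteq> \<Union>H\<close>] P(1)
    unfolding P'_def Tj_def by simp
  moreover have "trace (\<Union>H - Y) (\<Union>B\<in>P. Kf B) = (\<Union>B\<in>P'. Kf' B)"
    using trace_Union_blocks[where F=Kf, OF K_members P(3) Hj(1) \<open>Y \<subseteq> \<Union>Hj\<close>
        \<open>\<Union>(\<Union>P) \<subseteq> \<Union>H\<close>] \<open>Tj \<notin> P - {Hj}\<close>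
    unfolding P'_def Kf'_def by auto
  moreover have "construction (\<Union>P') (\<Union>B\<in>P'. Kf' B)"
  proof (rule construction_of_blocks[OF _ _ refl P'_disjoint])
    show "hypergraph (\<Union>P')" "atomic (\<Union>P')"
      using \<open>trace (\<Union>H - Y) H = \<Union>P'\<close> hypergraph_trace[OF H(1)] atomic_trace[OF H(2)] by metis+
    have "ASC Tj"
      unfolding Tj_def by (rule ASC_trace[OF finest_hpartition_block_ASC[OF H Hj(1)]])
    then show "\<And>B. B \<in> P' \<Longrightarrow> hconnected B"
      using conn unfolding P'_def ASC_def by blast
    show "\<And>B. B \<in> P' \<Longrightarrow> construction B (Kf' B)"
      using cons traced_Kj \<open>Tj \<notin> P - {Hj}\<close> unfolding P'_def Kf'_def Tj_def by auto
  qed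
  ultimately show ?thesis by simp
qed

lemma construction_trace:
  assumes "construction H L" "saturated H" "Y \<in> L"
  shows "construction (trace (\<Union>H - Y) H) (trace (\<Union>H - Y) L)"
  using assms
proof (induction arbitrary: Y rule: construction.induct)
  case empty
  then show ?case by simp
next
  case (conn H x K)
  show ?case
  proof (cases "Y = \<Union>H")
    case True
    then have "trace (\<Union>H - Y) F = {}" for F :: "'a set set" by (simp add: trace_def)
    then show ?thesis by (simp add: construction.empty)
  next
    case False
    then have "Y \<in> K" using conn.prems(2) by simp
    moreover have "saturated (restr H (\<Union>H - {x}))" using saturated_restr conn.prems(1) by blast
    ultimately have "construction (trace (\<Union>H - {x} - Y) (restr H (\<Union>H - {x})))
                                  (trace (\<Union>H - {x} - Y) K)"
      using conn.IH unfolding Union_restr_delete[OF conn.hyps(2)] by blast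
    then show ?thesis
      using construction_trace_delete_step[OF conn.hyps(1,2) conn.prems(1) conn.hyps(3-5)]
        \<open>Y \<in> K\<close> by blast
  qed
next
  case (split H P Kf)
  then obtain Hj where "Hj \<in> P" "Y \<in> Kf Hj" by blast
  moreover have "saturated Hj"
    using finest_hpartition_block_ASC[OF split.hyps(1,2) split.prems(1) split.hyps(4) \<open>Hj \<in> P\<close>]
    by (simp add: ASC_def)
  ultimately show ?case
    using construction_trace_split_step[OF split.hyps(1,2) split.prems(1) split.hyps(4)] split.IH
    by blast
qed

theorem proposition7p4:
  fixes H L :: "'a set set" and Y Z :: "'a set"
  assumes "ASC H"
    and "construction H L"
    and "Y \<in> L"
    and "Z = \<Union>H - Y"
  shows "ASC (trace Z H) \<and> construction (trace Z H) (trace Z L)"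
proof
  show "ASC (trace Z H)" by (rule ASC_trace[OF assms(1)])
  have "saturated H" using assms(1) by (simp add: ASC_def)
  then show "construction (trace Z H) (trace Z L)"
    using construction_trace[OF assms(2) _ assms(3)] assms(4) by simp
qed

end
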